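(* Let $\chi=(\chi_u,\ (\chi^k_\alpha)_{k\in\mathbb Z_+,\alpha\in N},\ \chi_{p,0},\ \chi_{p,1})$ be a family of elements of $\mathcal A(\mathbf{CPE})$ with only finitely many nonzero members. Then $\chi$ satisfies the system $$\begin{aligned} &D_1\chi_u+2D_\alpha(u^\alpha_{(1)}\chi_{p,1})=0,\\ &D_1\chi^k_\alpha+\delta^k_0D_\alpha\chi_u+\chi^{k-1}_\alpha+2\big(\delta^k_0D_\alpha(u^\beta_{(\beta)}\chi_{p,1})-\delta^k_1u^1_{(\alpha)}\chi_{p,1}+\delta^k_0D_\beta(u^\beta_{(\alpha)}\chi_{p,1})\big)=0\quad(k\in\mathbb Z_+,\ \alpha\in N,\ \chi^{-1}_\alpha:=0),\\ &D_1\chi_{p,0}-\Delta'\chi_{p,1}=0,\\ &D_1\chi_{p,1}+\chi_{p,0}=0 \end{aligned}$$ if and only if $$\chi^0_\alpha=2u^1_{(\alpha)}\chi_{p,1},\qquad \chi^k_\alpha=0\ (k\ge1),\qquad \chi_{p,0}=-D_1\chi_{p,1}\qquad(\alpha\in N),$$ where $\chi_{p,1}$ and $\chi_u$ satisfy $$\Delta\chi_{p,1}=0,\qquad \big(u^\mu_{(1)}D_\mu D_\alpha-u^\mu_{(\alpha)}D_\mu D_1\big)\chi_{p,1}=0\quad(\alpha\in N),$$ $$D_1\chi_u=-2D_\alpha(u^\alpha_{(1)}\chi_{p,1}),\qquad D_\alpha\chi_u=-2\big(u^\mu_{(\alpha)}D_\mu\chi_{p,1}+D_\alpha(u^\beta_{(\beta)}\chi_{p,1})\big)\quad(\alpha\in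 N).$$
   Context: Fix an integer $m\ge 2$, $M=\{1,\dots,m\}$, $N=\{2,\dots,m\}$. Indices $\lambda,\mu,\nu$ range over $M$, indices $\alpha,\beta$ over $N$; repeated upper/lower indices are summed; $\delta^k_l$ is the Kronecker delta. $\mathbb I=\mathbb Z_+^m$ is the set of multi-indices $\mathrm i=(i^1,\dots,i^m)$; $\mathrm i+(\mu)$ is $\mathrm i$ with its $\mu$-th entry increased by $1$, $(\mu)=0+(\mu)$, $2(\mu)=(\mu)+(\mu)$; $\mathbb I_0=\{\mathrm i: i^1=0\}$, $\mathbb I_1=\{\mathrm i: i^1\in\{0,1\}\}$. The space $\mathbf B$ has coordinates $x^\mu$, $u^\mu_{\mathrm i}$, $p_{\mathrm i}$ ($\mathrm i\in\mathbb I$); $\mathcal A(\mathbf B)$ is the algebra of smooth real functions depending on finitely many coordinates; total derivatives $D_\mu=\partial_{x^\mu}+u^\lambda_{\mathrm i+(\mu)}\partial_{u^\lambda_{\mathrm i}}+p_{\mathrm i+(\mu)}\partial_{p_{\mathrm i}}$ (commuting), $D_{\mathrm i}=D_1^{i^1}\cdots D_m^{i^m}$, $\Delta=\sum_{\mu\in M}D_\mu^2$, $\Delta'=\sum_{\alpha\in N}D_\alpha^2$. Let $CE_{\mathrm i}=u^\mu_{\mathrm i+(\mu)}$ and $PE_{\mathrm i}=\Delta p_{\mathrm i}+D_{\mathrm i}(u^\lambda_{(\mu)}u^\mu_{(\lambda)})$, where $\Delta p_{\mathrm i}=\sum_\mu p_{\mathrm i+2(\mu)}$. Let $\mathcal J\subset\mathcal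 A(\mathbf B)$ be the ideal generated by all $CE_{\mathrm i}$ and $PE_{\mathrm i}$, $\mathrm i\in\mathbb I$ (stable under the $D_\mu$), and $\mathcal A(\mathbf{CPE})=\mathcal A(\mathbf B)/\mathcal J$ with the induced commuting derivations $D_\mu$. Concretely, $\mathcal A(\mathbf{CPE})$ consists of smooth functions of finitely many of the global coordinates $x^\mu$, $u^1_{\mathrm i}$ ($\mathrm i\in\mathbb I_0$), $u^\alpha_{\mathrm i}$ ($\alpha\in N$, $\mathrm i\in\mathbb I$), $p_{\mathrm i}$ ($\mathrm i\in\mathbb I_1$), where the remaining variables are expressed recursively by $u^1_{\mathrm k}=-u^\beta_{\mathrm k-(1)+(\beta)}$ ($k^1\ge1$) and $p_{\mathrm k}=-D_{\mathrm k-2(1)}\Phi$ ($k^1\ge2$), with $\Phi=\Delta'p+u^\lambda_{(\mu)}u^\mu_{(\lambda)}$ in which $u^1_{(1)}$ is replaced by $-u^\alpha_{(\alpha)}$; the derivations $D_\mu$ act by the formula above followed by these substitutions. (In the paper the components $\chi_u,\chi^k_\alpha,\chi_{p,0},\chi_{p,1}$ are denoted $\chi^0_1,\chi^{i^1}_\alpha,\chi^0,\chi^1$, and the system is written $(D_1+\mathrm f^* )\chi=0$.) *)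

theory Defs
  imports "HOL-Analysis.Analysis"
begin

text \<open>Coordinates of the jet space B: x^mu, u^mu_i, p_i.  Multi-indices are
functions nat => nat supported in {1..m}.\<close>

datatype coord = X nat | U nat "nat \<Rightarrow> nat" | P "nat \<Rightarrow> nat"

type_synonym fn = "(coord \<Rightarrow> real) \<Rightarrow> real"

definition mi :: "nat \<Rightarrow> (nat \<Rightarrow> nat) \<Rightarrow> bool" where
  "mi m i \<longleftrightarrow> (\<forall>j. j \<notin> {1..m} \<longrightarrow> i j = 0)"

definition valid_coord :: "nat \<Rightarrow> coord \<Rightarrow> bool" where
  "valid_coord m c = (case c of X mu \<Rightarrow> mu \<in> {1..m}
                      | U mu i \<Rightarrow> mu \<in> {1..m} \<and> mi m i
                      | P i \<Rightarrow> mi m i)"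

definition shift :: "(nat \<Rightarrow> nat) \<Rightarrow> nat \<Rightarrow> (nat \<Rightarrow> nat)" where
  "shift i mu = i(mu := Suc (i mu))"

definition unit :: "nat \<Rightarrow> (nat \<Rightarrow> nat)" where
  "unit mu = shift (\<lambda>_. 0) mu"

definition supp :: "fn \<Rightarrow> coord set" where
  "supp f = {c. \<exists>v t. f (v(c := t)) \<noteq> f v}"

definition pd :: "coord \<Rightarrow> fn \<Rightarrow> fn" where
  "pd c f = (\<lambda>v. deriv (\<lambda>t. f (v(c := t))) (v c))"

coinductive smooth :: "fn \<Rightarrow> bool" where
  "finite (supp f) \<Longrightarrow> continuous_on UNIV f
   \<Longrightarrow> (\<forall>c v. (\<lambda>t. f (v(c := t))) differentiable (at (v c)))
   \<Longrightarrow> (\<forall>c. smooth (pd c f)) \<Longrightarrow> smooth f"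

definition AB :: "nat \<Rightarrow> fn set" where
  "AB m = {f. finite (supp f) \<and> (\<forall>c\<in>supp f. valid_coord m c) \<and> smooth f}"

fun tcoef :: "nat \<Rightarrow> coord \<Rightarrow> (coord \<Rightarrow> real) \<Rightarrow> real" where
  "tcoef mu (X nu) v = (if nu = mu then 1 else 0)"
| "tcoef mu (U lam i) v = v (U lam (shift i mu))"
| "tcoef mu (P i) v = v (P (shift i mu))"

definition Dt :: "nat \<Rightarrow> fn \<Rightarrow> fn" where
  "Dt mu f = (\<lambda>v. \<Sum>c\<in>supp f. tcoef mu c v * pd c f v)"

definition Dmi :: "nat \<Rightarrow> (nat \<Rightarrow> nat) \<Rightarrow> fn \<Rightarrow> fn" where
  "Dmi m i f = foldr (\<lambda>mu g. (Dt mu ^^ i mu) g) [1..<Suc m] f"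

definition uc :: "nat \<Rightarrow> nat \<Rightarrow> fn" where
  "uc lam mu = (\<lambda>v. v (U lam (unit mu)))"

definition CE :: "nat \<Rightarrow> (nat \<Rightarrow> nat) \<Rightarrow> fn" where
  "CE m i = (\<lambda>v. \<Sum>mu\<in>{1..m}. v (U mu (shift i mu)))"

definition PE :: "nat \<Rightarrow> (nat \<Rightarrow> nat) \<Rightarrow> fn" where
  "PE m i = (\<lambda>v. (\<Sum>mu\<in>{1..m}. v (P (shift (shift i mu) mu)))
      + Dmi m i (\<lambda>w. \<Sum>lam\<in>{1..m}. \<Sum>mu\<in>{1..m}. w (U lam (unit mu)) * w (U mu (unit lam))) v)"

definition gens :: "nat \<Rightarrow> fn set" where
  "gens m = {CE m i | i. mi m i} \<union> {PE m i | i. mi m i}"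

inductive_set J :: "nat \<Rightarrow> fn set" for m where
  J_zero: "(\<lambda>v. 0) \<in> J m"
| J_step: "a \<in> AB m \<Longrightarrow> g \<in> gens m \<Longrightarrow> h \<in> J m \<Longrightarrow> (\<lambda>v. a v * g v + h v) \<in> J m"

definition Lap :: "nat \<Rightarrow> fn \<Rightarrow> fn" where
  "Lap m f = (\<lambda>v. \<Sum>mu\<in>{1..m}. Dt mu (Dt mu f) v)"

definition Lap' :: "nat \<Rightarrow> fn \<Rightarrow> fn" where
  "Lap' m f = (\<lambda>v. \<Sum>a\<in>{2..m}. Dt a (Dt a f) v)"

end

theory Submission
  imports Defs
begin

text \<open>
  Work modulo the differential ideal J, that is, in A(CPE). For k >= 2 the equations for the
  chi^k_alpha read D_1 chi^k_alpha + chi^(k-1)_alpha = 0; as only finitely many chi^k_alpha are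
  nonzero, descending induction on k kills every chi^k_alpha with k >= 1, and the equation for
  k = 1 then determines chi^0_alpha. After this substitution the equation for k = 0 differs from
  the stated formula for D_alpha chi_u by a multiple of the continuity equation. The two pressure
  equations combine to Delta chi_(p,1) = 0, and the second-order condition on chi_(p,1) is the
  integrability condition D_alpha D_1 chi_u = D_1 D_alpha chi_u between the two equations for
  chi_u, again up to the continuity equation. The converse is the same computation read
  backwards. Underneath lies the fact that the total derivatives are commuting derivations; their
  commutation rests on Schwarz's theorem for smooth functions of finitely many coordinates.
\<close>

section \<open>Coordinate support and partial derivatives\<close>

lemma notin_supp_upd: "c \<notin> supp f \<Longrightarrow> f (v(c := t)) = f v"
  unfolding supp_def by auto

lemma supp_const [simp]: "supp (\<lambda>v. k) = {}"
  unfolding supp_def by auto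

lemma supp_coord: "supp (\<lambda>v. v d) \<subseteq> {d}"
  unfolding supp_def by auto

lemma supp_binop: "supp (\<lambda>v. h (f v) (g v)) \<subseteq> supp f \<union> supp g"
proof
  fix c assume c: "c \<in> supp (\<lambda>v. h (f v) (g v))"
  show "c \<in> supp f \<union> supp g"
  proof (rule ccontr)
    assume "c \<notin> supp f \<union> supp g"
    then have "h (f (v(c := t))) (g (v(c := t))) = h (f v) (g v)" for v t
      by (simp add: notin_supp_upd)
    with c show False unfolding supp_def by auto
  qed
qed

lemma supp_sum: "supp (\<lambda>v. \<Sum>x\<in>A. F x v) \<subseteq> (\<Union>x\<in>A. supp (F x))"
proof
  fix c assume "c \<in> supp (\<lambda>v. \<Sum>x\<in>A. F x v)"
  then obtain v t where "(\<Sum>x\<in>A. F x (v(c := t))) \<noteq> (\<Sum>x\<in>A. F x v)"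
    unfolding supp_def by auto
  then obtain x where "x \<in> A" "F x (v(c := t)) \<noteq> F x v" by (meson sum.cong)
  then show "c \<in> (\<Union>x\<in>A. supp (F x))" unfolding supp_def by auto
qed

lemma pd_notin_supp: "c \<notin> supp f \<Longrightarrow> pd c f v = 0"
  unfolding pd_def by (simp add: notin_supp_upd)

lemma supp_pd: "supp (pd c f) \<subseteq> supp f"
proof
  fix d assume d: "d \<in> supp (pd c f)"
  show "d \<in> supp f"
  proof (rule ccontr)
    assume nd: "d \<notin> supp f"
    have "pd c f (v(d := t)) = pd c f v" for v t
    proof (cases "d = c")
      case True
      then show ?thesis using nd by (simp add: pd_notin_supp)
    next
      case False
      then have "(\<lambda>s. f (v(d := t, c := s))) = (\<lambda>s. f (v(c := s)))"
        using notin_supp_upd[OF nd] by (simp add: fun_upd_twist)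
      with False show ?thesis by (simp add: pd_def)
    qed
    with d show False unfolding supp_def by auto
  qed
qed

definition has_partials :: "fn \<Rightarrow> bool" where
  "has_partials f \<longleftrightarrow> (\<forall>c v. (\<lambda>t. f (v(c := t))) differentiable (at (v c)))"

lemma has_partials_DERIV:
  assumes "has_partials f"
  shows "((\<lambda>t. f (v(c := t))) has_real_derivative pd c f (v(c := t))) (at t)"
proof -
  have "(\<lambda>s. f ((v(c := t))(c := s))) differentiable (at ((v(c := t)) c))"
    using assms unfolding has_partials_def by blast
  then show ?thesis
    by (simp add: pd_def DERIV_deriv_iff_real_differentiable)
qed

lemma has_partialsI:
  assumes "\<And>c v t. ((\<lambda>t. f (v(c := t))) has_real_derivative D c v t) (at t)"
  shows "has_partials f"
  unfolding has_partials_def using assms real_differentiable_def by blast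

lemma pd_eqI:
  assumes "\<And>t. ((\<lambda>t. f (v(c := t))) has_real_derivative D (v(c := t))) (at t)"
  shows "pd c f v = D v"
  using DERIV_imp_deriv[OF assms[of "v c"]] by (simp add: pd_def)

lemma has_partials_const: "has_partials (\<lambda>v. k)"
  by (rule has_partialsI[of _ "\<lambda>_ _ _. 0"]) simp

lemma has_partials_coord: "has_partials (\<lambda>v. v d)"
proof (rule has_partialsI[of _ "\<lambda>c _ _. if c = d then 1 else 0"])
  fix c v t
  show "((\<lambda>t. (v(c := t)) d) has_real_derivative (if c = d then 1 else 0)) (at t)"
    by (cases "c = d") (auto intro: derivative_eq_intros)
qed

lemma pd_const [simp]: "pd c (\<lambda>v. k) = (\<lambda>v. 0)"
  by (simp add: pd_def)

lemma pd_coord: "pd c (\<lambda>v. v d) = (\<lambda>v. if c = d then 1 else 0)"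
proof
  fix v
  show "pd c (\<lambda>v. v d) v = (if c = d then 1 else 0)"
    by (rule pd_eqI[where D = "\<lambda>_. if c = d then 1 else 0"])
      (cases "c = d"; auto intro: derivative_eq_intros)
qed

lemma
  assumes "has_partials f" "has_partials g"
  shows has_partials_add: "has_partials (\<lambda>v. f v + g v)"
    and pd_add: "pd c (\<lambda>v. f v + g v) = (\<lambda>v. pd c f v + pd c g v)"
    and pd_diff: "pd c (\<lambda>v. f v - g v) = (\<lambda>v. pd c f v - pd c g v)"
    and has_partials_mult: "has_partials (\<lambda>v. f v * g v)"
    and pd_mult: "pd c (\<lambda>v. f v * g v) = (\<lambda>v. pd c f v * g v + f v * pd c g v)"
proof -
  note f = has_partials_DERIV[OF assms(1)] and g = has_partials_DERIV[OF assms(2)]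
  show "has_partials (\<lambda>v. f v + g v)" "has_partials (\<lambda>v. f v * g v)"
    by (auto intro!: has_partialsI derivative_eq_intros f g)
  show "pd c (\<lambda>v. f v + g v) = (\<lambda>v. pd c f v + pd c g v)"
    by (intro ext pd_eqI[where D = "\<lambda>w. pd c f w + pd c g w"])
      (auto intro!: derivative_eq_intros f g)
  show "pd c (\<lambda>v. f v - g v) = (\<lambda>v. pd c f v - pd c g v)"
    by (intro ext pd_eqI[where D = "\<lambda>w. pd c f w - pd c g w"])
      (auto intro!: derivative_eq_intros f g)
  show "pd c (\<lambda>v. f v * g v) = (\<lambda>v. pd c f v * g v + f v * pd c g v)"
    by (intro ext pd_eqI[where D = "\<lambda>w. pd c f w * g w + f w * pd c g w"])
      (auto intro!: derivative_eq_intros f g)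
qed

lemma smoothD:
  assumes "smooth f"
  shows smooth_finite_supp: "finite (supp f)"
    and smooth_continuous: "continuous_on UNIV f"
    and smooth_has_partials: "has_partials f"
    and smooth_pd [simp, intro]: "smooth (pd c f)"
  using assms unfolding has_partials_def by (auto elim: smooth.cases)

text \<open>Closure of smoothness under sums and products cannot be proved by plain coinduction,
  since the partial derivatives of a product are sums of products; one coinducts up to the
  algebra generated by the smooth functions.\<close>

inductive smooth_alg :: "fn \<Rightarrow> bool" where
  smooth_alg_base: "smooth f \<Longrightarrow> smooth_alg f"
| smooth_alg_const: "smooth_alg (\<lambda>v. k)"
| smooth_alg_coord: "smooth_alg (\<lambda>v. v d)"
| smooth_alg_add: "smooth_alg f \<Longrightarrow> smooth_alg g \<Longrightarrow> smooth_alg (\<lambda>v. f v + g v)"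
| smooth_alg_mult: "smooth_alg f \<Longrightarrow> smooth_alg g \<Longrightarrow> smooth_alg (\<lambda>v. f v * g v)"

lemma smooth_alg_unfold:
  assumes "smooth_alg f"
  shows "finite (supp f) \<and> continuous_on UNIV f \<and> has_partials f \<and> (\<forall>c. smooth_alg (pd c f))"
  using assms
proof induction
  case (smooth_alg_base f)
  then have "smooth_alg (pd c f)" for c by (intro smooth_alg.smooth_alg_base smoothD(4))
  then show ?case using smoothD(1-3)[OF smooth_alg_base] by simp
next
  case smooth_alg_const
  then show ?case by (auto intro: has_partials_const smooth_alg.intros)
next
  case (smooth_alg_coord d)
  then show ?case
    by (auto intro: finite_subset[OF supp_coord] has_partials_coord smooth_alg.intros
        simp: pd_coord)
next
  case (smooth_alg_add f g)
  then show ?case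
    using finite_subset[OF supp_binop[of "(+)" f g]]
    by (simp add: continuous_on_add has_partials_add pd_add smooth_alg.smooth_alg_add)
next
  case (smooth_alg_mult f g)
  then show ?case
    using finite_subset[OF supp_binop[of "(*)" f g]]
    by (simp add: continuous_on_mult has_partials_mult pd_mult smooth_alg.intros)
qed

lemma smooth_alg_smooth: "smooth_alg f \<Longrightarrow> smooth f"
proof (coinduction arbitrary: f rule: smooth.coinduct)
  case (smooth f)
  then show ?case using smooth_alg_unfold[OF smooth] unfolding has_partials_def by blast
qed

lemma smooth_const [simp, intro]: "smooth (\<lambda>v. k)"
  by (rule smooth_alg_smooth[OF smooth_alg_const])

lemma smooth_coord [simp, intro]: "smooth (\<lambda>v. v d)"
  by (rule smooth_alg_smooth[OF smooth_alg_coord])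

lemma smooth_add [simp, intro]: "smooth f \<Longrightarrow> smooth g \<Longrightarrow> smooth (\<lambda>v. f v + g v)"
  by (rule smooth_alg_smooth[OF smooth_alg_add[OF smooth_alg_base smooth_alg_base]])

lemma smooth_mult [simp, intro]: "smooth f \<Longrightarrow> smooth g \<Longrightarrow> smooth (\<lambda>v. f v * g v)"
  by (rule smooth_alg_smooth[OF smooth_alg_mult[OF smooth_alg_base smooth_alg_base]])

lemma smooth_diff [simp, intro]: "smooth f \<Longrightarrow> smooth g \<Longrightarrow> smooth (\<lambda>v. f v - g v)"
  using smooth_add[OF _ smooth_mult[OF smooth_const[of "-1"]], of f g] by simp

lemma smooth_sum [simp, intro]:
  "(\<And>x. x \<in> A \<Longrightarrow> smooth (F x)) \<Longrightarrow> smooth (\<lambda>v. \<Sum>x\<in>A. F x v)"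
  by (induction A rule: infinite_finite_induct) auto

section \<open>Symmetry of mixed partial derivatives\<close>

lemma second_difference_MVT:
  fixes g A AB :: "real \<Rightarrow> real \<Rightarrow> real"
  assumes gA: "\<And>s t. DERIV (\<lambda>s. g s t) s :> A s t"
    and AAB: "\<And>s t. DERIV (\<lambda>t. A s t) t :> AB s t"
    and h: "h > 0"
  obtains \<xi> \<eta> where "s0 < \<xi>" "\<xi> < s0 + h" "t0 < \<eta>" "\<eta> < t0 + h"
    "g (s0 + h) (t0 + h) - g (s0 + h) t0 - g s0 (t0 + h) + g s0 t0 = h * h * AB \<xi> \<eta>"
proof -
  have "\<exists>\<xi>. s0 < \<xi> \<and> \<xi> < s0 + h \<and> (g (s0 + h) (t0 + h) - g (s0 + h) t0)
      - (g s0 (t0 + h) - g s0 t0) = (s0 + h - s0) * (A \<xi> (t0 + h) - A \<xi> t0)"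
    by (rule MVT2[where f = "\<lambda>s. g s (t0 + h) - g s t0"]) (use h in simp, intro DERIV_diff gA)
  then obtain \<xi> where \<xi>: "s0 < \<xi>" "\<xi> < s0 + h"
    "(g (s0 + h) (t0 + h) - g (s0 + h) t0) - (g s0 (t0 + h) - g s0 t0)
       = (s0 + h - s0) * (A \<xi> (t0 + h) - A \<xi> t0)"
    by blast
  have "\<exists>\<eta>. t0 < \<eta> \<and> \<eta> < t0 + h \<and> A \<xi> (t0 + h) - A \<xi> t0 = (t0 + h - t0) * AB \<xi> \<eta>"
    by (rule MVT2[where f = "\<lambda>t. A \<xi> t"]) (use h in simp, rule AAB)
  then obtain \<eta> where \<eta>: "t0 < \<eta>" "\<eta> < t0 + h"
    "A \<xi> (t0 + h) - A \<xi> t0 = (t0 + h - t0) * AB \<xi> \<eta>"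
    by blast
  show ?thesis by (rule that[OF \<xi>(1,2) \<eta>(1,2)]) (use \<xi>(3) \<eta>(3) in simp)
qed

text \<open>Both mixed partials are limits of the same second difference quotient, by the mean value
  theorem applied in either order.\<close>

lemma mixed_partials_symmetric:
  fixes g A B AB BA :: "real \<Rightarrow> real \<Rightarrow> real"
  assumes gA: "\<And>s t. DERIV (\<lambda>s. g s t) s :> A s t"
    and gB: "\<And>s t. DERIV (\<lambda>t. g s t) t :> B s t"
    and AAB: "\<And>s t. DERIV (\<lambda>t. A s t) t :> AB s t"
    and BBA: "\<And>s t. DERIV (\<lambda>s. B s t) s :> BA s t"
    and cont_AB: "continuous_on UNIV (\<lambda>p. AB (fst p) (snd p))"
    and cont_BA: "continuous_on UNIV (\<lambda>p. BA (fst p) (snd p))"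
  shows "AB s0 t0 = BA s0 t0"
proof (rule ccontr)
  assume ne: "AB s0 t0 \<noteq> BA s0 t0"
  define e where "e = \<bar>AB s0 t0 - BA s0 t0\<bar> / 2"
  have e: "e > 0" using ne by (simp add: e_def)
  obtain d1 where d1: "d1 > 0"
      "\<And>p. dist p (s0, t0) < d1 \<Longrightarrow> dist (AB (fst p) (snd p)) (AB s0 t0) < e"
    using cont_AB e unfolding continuous_on_iff by (metis UNIV_I fst_conv snd_conv)
  obtain d2 where d2: "d2 > 0"
      "\<And>p. dist p (s0, t0) < d2 \<Longrightarrow> dist (BA (fst p) (snd p)) (BA s0 t0) < e"
    using cont_BA e unfolding continuous_on_iff by (metis UNIV_I fst_conv snd_conv)
  define h where "h = min d1 d2 / 2"
  have h: "h > 0" using d1 d2 by (simp add: h_def)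
  have close: "dist (x, y) (s0, t0) < min d1 d2"
    if "s0 < x" "x < s0 + h" "t0 < y" "y < t0 + h" for x y
  proof -
    have "dist (x, y) (s0, t0) \<le> \<bar>dist x s0\<bar> + \<bar>dist y t0\<bar>"
      unfolding dist_Pair_Pair by (rule sqrt_sum_squares_le_sum_abs)
    also have "\<dots> < 2 * h" using that by (simp add: dist_real_def)
    finally show ?thesis by (simp add: h_def)
  qed
  obtain \<xi> \<eta> where \<xi>\<eta>: "s0 < \<xi>" "\<xi> < s0 + h" "t0 < \<eta>" "\<eta> < t0 + h"
    "g (s0 + h) (t0 + h) - g (s0 + h) t0 - g s0 (t0 + h) + g s0 t0 = h * h * AB \<xi> \<eta>"
    using second_difference_MVT[OF gA AAB h] .
  obtain \<eta>' \<xi>' where \<xi>\<eta>': "t0 < \<eta>'" "\<eta>' < t0 + h" "s0 < \<xi>'" "\<xi>' < s0 + h"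
    "g (s0 + h) (t0 + h) - g s0 (t0 + h) - g (s0 + h) t0 + g s0 t0 = h * h * BA \<xi>' \<eta>'"
    using second_difference_MVT[where g = "\<lambda>t s. g s t", OF gB BBA h] .
  have "AB \<xi> \<eta> = BA \<xi>' \<eta>'"
    using \<xi>\<eta>(5) \<xi>\<eta>'(5) h by (simp add: algebra_simps)
  moreover have "dist (AB \<xi> \<eta>) (AB s0 t0) < e"
    using d1(2)[of "(\<xi>, \<eta>)"] close[OF \<xi>\<eta>(1-4)] by simp
  moreover have "dist (BA \<xi>' \<eta>') (BA s0 t0) < e"
    using d2(2)[of "(\<xi>', \<eta>')"] close[OF \<xi>\<eta>'(3,4,1,2)] by simp
  ultimately have "\<bar>AB s0 t0 - BA s0 t0\<bar> < 2 * e" by (simp add: dist_real_def)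
  then show False by (simp add: e_def)
qed

lemma continuous_on_upd2:
  assumes "smooth f"
  shows "continuous_on UNIV (\<lambda>p :: real \<times> real. f (v(c := fst p, d := snd p)))"
proof -
  have "continuous_on UNIV (\<lambda>p :: real \<times> real. v(c := fst p, d := snd p))"
  proof (rule continuous_on_coordinatewise_then_product)
    fix i
    show "continuous_on UNIV (\<lambda>p :: real \<times> real. (v(c := fst p, d := snd p)) i)"
      by (cases "i = d"; cases "i = c") (auto intro!: continuous_intros)
  qed
  moreover have "continuous_on (range (\<lambda>p :: real \<times> real. v(c := fst p, d := snd p))) f"
    using continuous_on_subset[OF smooth_continuous[OF assms]] by blast
  ultimately show ?thesis using continuous_on_compose by (auto simp: o_def)
qed

lemma pd_commute:
  assumes f: "smooth f"
  shows "pd d (pd c f) = pd c (pd d f)"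
proof
  fix v
  show "pd d (pd c f) v = pd c (pd d f) v"
  proof (cases "c = d")
    case False
    let ?u = "\<lambda>s t. v(c := s, d := t)"
    have DERIV_c: "DERIV (\<lambda>s. h (?u s t)) s :> pd c h (?u s t)" if "smooth h" for h s t
      using has_partials_DERIV[OF smooth_has_partials[OF that], of "?u s0 t" c s] False
      by (simp add: fun_upd_twist)
    have DERIV_d: "DERIV (\<lambda>t. h (?u s t)) t :> pd d h (?u s t)" if "smooth h" for h s t
      using has_partials_DERIV[OF smooth_has_partials[OF that], of "?u s t0" d t] by simp
    have "pd d (pd c f) (?u (v c) (v d)) = pd c (pd d f) (?u (v c) (v d))"
      by (rule mixed_partials_symmetric[where g = "\<lambda>s t. f (?u s t)"
            and A = "\<lambda>s t. pd c f (?u s t)" and B = "\<lambda>s t. pd d f (?u s t)"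
            and AB = "\<lambda>s t. pd d (pd c f) (?u s t)" and BA = "\<lambda>s t. pd c (pd d f) (?u s t)"])
        (intro DERIV_c DERIV_d continuous_on_upd2 smooth_pd f)+
    then show ?thesis by simp
  qed simp
qed

section \<open>Total derivatives\<close>

lemma Dt_eq_sum_superset:
  "finite S \<Longrightarrow> supp f \<subseteq> S \<Longrightarrow> Dt mu f v = (\<Sum>c\<in>S. tcoef mu c v * pd c f v)"
  unfolding Dt_def by (rule sum.mono_neutral_left) (auto simp: pd_notin_supp)

lemma Dt_eq_combination:
  assumes f: "smooth f" and g: "smooth g" and h: "supp h \<subseteq> supp f \<union> supp g"
    and pd_h: "\<And>c. pd c h v = pd c f v * a + pd c g v * b"
  shows "Dt mu h v = Dt mu f v * a + Dt mu g v * b"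
proof -
  let ?S = "supp f \<union> supp g"
  have S: "finite ?S" using f g by (simp add: smooth_finite_supp)
  have "Dt mu h v = (\<Sum>c\<in>?S. tcoef mu c v * pd c f v) * a + (\<Sum>c\<in>?S. tcoef mu c v * pd c g v) * b"
    by (simp add: Dt_eq_sum_superset[OF S h] pd_h sum_distrib_right sum_distrib_left sum.distrib
        algebra_simps)
  then show ?thesis by (simp add: Dt_eq_sum_superset[OF S])
qed

lemma
  assumes f: "smooth f" and g: "smooth g"
  shows Dt_add: "Dt mu (\<lambda>v. f v + g v) = (\<lambda>v. Dt mu f v + Dt mu g v)"
    and Dt_diff: "Dt mu (\<lambda>v. f v - g v) = (\<lambda>v. Dt mu f v - Dt mu g v)"
    and Dt_mult: "Dt mu (\<lambda>v. f v * g v) = (\<lambda>v. Dt mu f v * g v + f v * Dt mu g v)"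
proof -
  note partials = smooth_has_partials[OF f] smooth_has_partials[OF g]
  show "Dt mu (\<lambda>v. f v + g v) = (\<lambda>v. Dt mu f v + Dt mu g v)"
    using Dt_eq_combination[OF f g supp_binop[of "(+)"], where a = 1 and b = 1]
    by (simp add: pd_add[OF partials] fun_eq_iff)
  show "Dt mu (\<lambda>v. f v - g v) = (\<lambda>v. Dt mu f v - Dt mu g v)"
    using Dt_eq_combination[OF f g supp_binop[of "(-)"], where a = 1 and b = "-1"]
    by (simp add: pd_diff[OF partials] fun_eq_iff)
  show "Dt mu (\<lambda>v. f v * g v) = (\<lambda>v. Dt mu f v * g v + f v * Dt mu g v)"
  proof
    fix v
    show "Dt mu (\<lambda>v. f v * g v) v = Dt mu f v * g v + f v * Dt mu g v"
      using Dt_eq_combination[OF f g supp_binop[of "(*)"], where a = "g v" and b = "f v"]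
      by (simp add: pd_mult[OF partials] mult.commute)
  qed
qed

lemma Dt_const [simp]: "Dt mu (\<lambda>v. k) = (\<lambda>v. 0)"
  unfolding Dt_def by simp

lemma Dt_coord: "Dt mu (\<lambda>v. v c) = tcoef mu c"
proof
  fix v
  show "Dt mu (\<lambda>v. v c) v = tcoef mu c v"
    using Dt_eq_sum_superset[of "{c}" "\<lambda>v. v c"] supp_coord by (simp add: pd_coord)
qed

lemma Dt_coord_U [simp]: "Dt mu (\<lambda>v. v (U l i)) = (\<lambda>v. v (U l (shift i mu)))"
  by (simp add: Dt_coord fun_eq_iff)

lemma Dt_coord_P [simp]: "Dt mu (\<lambda>v. v (P i)) = (\<lambda>v. v (P (shift i mu)))"
  by (simp add: Dt_coord fun_eq_iff)

lemma Dt_sum: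
  "(\<And>x. x \<in> A \<Longrightarrow> smooth (F x)) \<Longrightarrow> Dt mu (\<lambda>v. \<Sum>x\<in>A. F x v) = (\<lambda>v. \<Sum>x\<in>A. Dt mu (F x) v)"
proof (induction A rule: infinite_finite_induct)
  case (insert x A)
  then show ?case by (simp add: Dt_add)
qed auto

lemma tcoef_eq_coord:
  "tcoef mu c = (case c of X nu \<Rightarrow> (\<lambda>v. if nu = mu then 1 else 0)
     | U l i \<Rightarrow> (\<lambda>v. v (U l (shift i mu))) | P i \<Rightarrow> (\<lambda>v. v (P (shift i mu))))"
  by (cases c) (simp_all add: fun_eq_iff)

lemma smooth_tcoef [simp, intro]: "smooth (tcoef mu c)"
  by (simp add: tcoef_eq_coord split: coord.split)

lemma smooth_Dt [simp, intro]: "smooth f \<Longrightarrow> smooth (Dt mu f)"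
  unfolding Dt_def by simp

lemma shift_commute: "shift (shift i a) b = shift (shift i b) a"
  by (auto simp: shift_def fun_eq_iff)

lemma Dt_tcoef_commute: "Dt mu (tcoef nu c) = Dt nu (tcoef mu c)"
  by (simp add: tcoef_eq_coord shift_commute split: coord.split)

lemma Dt_Dt_eq:
  assumes f: "smooth f"
  shows "Dt mu (Dt nu f) v = (\<Sum>c\<in>supp f. Dt mu (tcoef nu c) v * pd c f v)
     + (\<Sum>c\<in>supp f. \<Sum>c'\<in>supp f. tcoef nu c v * tcoef mu c' v * pd c' (pd c f) v)"
proof -
  have S: "finite (supp f)" using f by (rule smooth_finite_supp)
  have "Dt mu (Dt nu f) v = (\<Sum>c\<in>supp f. Dt mu (tcoef nu c) v * pd c f v
      + tcoef nu c v * (\<Sum>c'\<in>supp f. tcoef mu c' v * pd c' (pd c f) v))"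
    by (simp add: Dt_def[of nu f] Dt_sum Dt_mult f Dt_eq_sum_superset[OF S supp_pd])
  then show ?thesis by (simp add: sum.distrib sum_distrib_left mult.assoc)
qed

lemma Dt_commute:
  assumes f: "smooth f"
  shows "Dt mu (Dt nu f) = Dt nu (Dt mu f)"
proof
  fix v
  have "(\<Sum>c\<in>supp f. \<Sum>c'\<in>supp f. tcoef nu c v * tcoef mu c' v * pd c' (pd c f) v)
      = (\<Sum>c'\<in>supp f. \<Sum>c\<in>supp f. tcoef mu c' v * tcoef nu c v * pd c (pd c' f) v)"
    by (subst sum.swap) (simp add: pd_commute[OF f] mult.commute)
  then show "Dt mu (Dt nu f) v = Dt nu (Dt mu f) v"
    by (simp add: Dt_Dt_eq[OF f] Dt_tcoef_commute)
qed

lemma AB_iff: "f \<in> AB m \<longleftrightarrow> smooth f \<and> (\<forall>c\<in>supp f. valid_coord m c)"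
  unfolding AB_def using smooth_finite_supp by blast

lemma AB_smooth: "f \<in> AB m \<Longrightarrow> smooth f"
  by (simp add: AB_iff)

lemma AB_const [simp, intro]: "(\<lambda>v. k) \<in> AB m"
  by (simp add: AB_iff)

lemma AB_coord: "valid_coord m c \<Longrightarrow> (\<lambda>v. v c) \<in> AB m"
  using supp_coord[of c] by (auto simp: AB_iff)

lemma AB_binop:
  "f \<in> AB m \<Longrightarrow> g \<in> AB m \<Longrightarrow> smooth (\<lambda>v. h (f v) (g v)) \<Longrightarrow> (\<lambda>v. h (f v) (g v)) \<in> AB m"
  using supp_binop[of h f g] by (auto simp: AB_iff)

lemma AB_add [intro]: "f \<in> AB m \<Longrightarrow> g \<in> AB m \<Longrightarrow> (\<lambda>v. f v + g v) \<in> AB m"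
  by (rule AB_binop) (auto simp: AB_smooth)

lemma AB_mult [intro]: "f \<in> AB m \<Longrightarrow> g \<in> AB m \<Longrightarrow> (\<lambda>v. f v * g v) \<in> AB m"
  by (rule AB_binop) (auto simp: AB_smooth)

lemma AB_sum [intro]: "(\<And>x. x \<in> A \<Longrightarrow> F x \<in> AB m) \<Longrightarrow> (\<lambda>v. \<Sum>x\<in>A. F x v) \<in> AB m"
  using supp_sum[of F A] by (force simp: AB_iff)

lemma AB_pd: "f \<in> AB m \<Longrightarrow> pd c f \<in> AB m"
  using supp_pd[of c f] by (auto simp: AB_iff)

lemma mi_shift: "mi m i \<Longrightarrow> mu \<in> {1..m} \<Longrightarrow> mi m (shift i mu)"
  unfolding mi_def shift_def by auto

lemma mi_zero: "mi m (\<lambda>_. 0)"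
  unfolding mi_def by auto

lemma mi_unit: "mu \<in> {1..m} \<Longrightarrow> mi m (unit mu)"
  unfolding unit_def by (intro mi_shift mi_zero)

lemma AB_tcoef: "mu \<in> {1..m} \<Longrightarrow> valid_coord m c \<Longrightarrow> tcoef mu c \<in> AB m"
  by (auto simp: tcoef_eq_coord valid_coord_def mi_shift intro: AB_coord split: coord.split)

lemma AB_Dt: "f \<in> AB m \<Longrightarrow> mu \<in> {1..m} \<Longrightarrow> Dt mu f \<in> AB m"
  unfolding Dt_def by (intro AB_sum AB_mult AB_tcoef AB_pd) (auto simp: AB_iff)

definition Dfold :: "nat list \<Rightarrow> (nat \<Rightarrow> nat) \<Rightarrow> fn \<Rightarrow> fn" where
  "Dfold L i f = foldr (\<lambda>mu g. (Dt mu ^^ i mu) g) L f"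

lemma Dfold_Nil [simp]: "Dfold [] i f = f"
  by (simp add: Dfold_def)

lemma Dfold_Cons [simp]: "Dfold (nu # L) i f = (Dt nu ^^ i nu) (Dfold L i f)"
  by (simp add: Dfold_def)

lemma Dmi_eq_Dfold: "Dmi m i f = Dfold [1..<Suc m] i f"
  unfolding Dmi_def Dfold_def ..

lemma smooth_Dt_funpow [simp, intro]: "smooth f \<Longrightarrow> smooth ((Dt nu ^^ n) f)"
  by (induction n) auto

lemma smooth_Dfold [simp, intro]: "smooth f \<Longrightarrow> smooth (Dfold L i f)"
  by (induction L) auto

lemma smooth_Dmi [simp, intro]: "smooth f \<Longrightarrow> smooth (Dmi m i f)"
  by (simp add: Dmi_eq_Dfold)

lemma AB_Dt_funpow: "f \<in> AB m \<Longrightarrow> nu \<in> {1..m} \<Longrightarrow> (Dt nu ^^ n) f \<in> AB m"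
  by (induction n) (auto intro: AB_Dt)

lemma AB_Dfold: "f \<in> AB m \<Longrightarrow> set L \<subseteq> {1..m} \<Longrightarrow> Dfold L i f \<in> AB m"
  by (induction L) (auto intro: AB_Dt_funpow)

lemma AB_Dmi: "f \<in> AB m \<Longrightarrow> Dmi m i f \<in> AB m"
  unfolding Dmi_eq_Dfold by (rule AB_Dfold) auto

lemma Dt_funpow_commute: "smooth f \<Longrightarrow> Dt mu ((Dt nu ^^ n) f) = (Dt nu ^^ n) (Dt mu f)"
proof (induction n)
  case (Suc n)
  have "Dt mu ((Dt nu ^^ Suc n) f) = Dt nu (Dt mu ((Dt nu ^^ n) f))"
    using Dt_commute[OF smooth_Dt_funpow[OF Suc.prems]] by simp
  also have "\<dots> = (Dt nu ^^ Suc n) (Dt mu f)"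
    using Suc by simp
  finally show ?case .
qed simp

lemma Dfold_cong: "(\<And>x. x \<in> set L \<Longrightarrow> i x = j x) \<Longrightarrow> Dfold L i f = Dfold L j f"
  by (induction L) auto

lemma Dfold_shift:
  "distinct L \<Longrightarrow> mu \<in> set L \<Longrightarrow> smooth f \<Longrightarrow> Dfold L (shift i mu) f = Dt mu (Dfold L i f)"
proof (induction L)
  case (Cons nu L)
  show ?case
  proof (cases "nu = mu")
    case True
    with Cons.prems have rest: "Dfold L (shift i mu) f = Dfold L i f"
      by (intro Dfold_cong) (auto simp: shift_def)
    from True rest show ?thesis by (simp only: Dfold_Cons) (simp add: shift_def)
  next
    case False
    with Cons show ?thesis by (simp add: shift_def Dt_funpow_commute)
  qed
qed simp

lemma Dt_Dmi: "mu \<in> {1..m} \<Longrightarrow> smooth f \<Longrightarrow> Dt mu (Dmi m i f) = Dmi m (shift i mu) f"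
  unfolding Dmi_eq_Dfold by (subst Dfold_shift) auto

section \<open>The differential ideal J\<close>

definition quad_u :: "nat \<Rightarrow> fn" where
  "quad_u m = (\<lambda>w. \<Sum>lam\<in>{1..m}. \<Sum>mu\<in>{1..m}. w (U lam (unit mu)) * w (U mu (unit lam)))"

lemma PE_eq: "PE m i = (\<lambda>v. (\<Sum>mu\<in>{1..m}. v (P (shift (shift i mu) mu))) + Dmi m i (quad_u m) v)"
  unfolding PE_def quad_u_def ..

lemma AB_quad_u: "quad_u m \<in> AB m"
  unfolding quad_u_def by (intro AB_sum AB_mult AB_coord) (auto simp: valid_coord_def mi_unit)

lemma AB_CE: "mi m i \<Longrightarrow> CE m i \<in> AB m"
  unfolding CE_def by (intro AB_sum AB_coord) (auto simp: valid_coord_def mi_shift)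

lemma AB_PE: "mi m i \<Longrightarrow> PE m i \<in> AB m"
  unfolding PE_eq
  by (intro AB_add AB_sum AB_coord AB_Dmi AB_quad_u) (auto simp: valid_coord_def mi_shift)

lemma Dt_CE: "Dt mu (CE m i) = CE m (shift i mu)"
  unfolding CE_def by (simp add: Dt_sum shift_commute[of i _ mu])

lemma Dt_PE: "mu \<in> {1..m} \<Longrightarrow> Dt mu (PE m i) = PE m (shift i mu)"
  using AB_smooth[OF AB_quad_u]
  by (simp add: PE_eq Dt_add Dt_sum Dt_Dmi
      shift_commute[of "shift i _" _ mu] shift_commute[of i _ mu])

lemma gens_AB: "g \<in> gens m \<Longrightarrow> g \<in> AB m"
  unfolding gens_def using AB_CE AB_PE by auto

lemma Dt_gens: "g \<in> gens m \<Longrightarrow> mu \<in> {1..m} \<Longrightarrow> Dt mu g \<in> gens m"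
  unfolding gens_def using Dt_CE Dt_PE mi_shift by auto

lemma J_subset_AB: "f \<in> J m \<Longrightarrow> f \<in> AB m"
  by (induction rule: J.induct) (simp_all add: AB_add AB_mult gens_AB)

lemma J_add: "f \<in> J m \<Longrightarrow> g \<in> J m \<Longrightarrow> (\<lambda>v. f v + g v) \<in> J m"
proof (induction rule: J.induct)
  case (J_step a g' h)
  then have "(\<lambda>v. a v * g' v + (h v + g v)) \<in> J m" by (intro J.J_step)
  then show ?case by (simp add: add.assoc)
qed simp

lemma J_mult: "f \<in> J m \<Longrightarrow> a \<in> AB m \<Longrightarrow> (\<lambda>v. a v * f v) \<in> J m"
proof (induction rule: J.induct)
  case J_zero
  then show ?case using J.J_zero by simp
next
  case (J_step b g h)
  then have "(\<lambda>v. (\<lambda>v. a v * b v) v * g v + a v * h v) \<in> J m" by (intro J.J_step AB_mult)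
  then show ?case by (simp add: algebra_simps)
qed

lemma J_gen: "g \<in> gens m \<Longrightarrow> g \<in> J m"
  using J.J_step[OF AB_const[of 1] _ J.J_zero] by simp

lemma CE_in_J: "mi m i \<Longrightarrow> CE m i \<in> J m"
  by (rule J_gen) (auto simp: gens_def)

lemma J_diff: "f \<in> J m \<Longrightarrow> g \<in> J m \<Longrightarrow> (\<lambda>v. f v - g v) \<in> J m"
  using J_add[OF _ J_mult[of g m "\<lambda>v. -1"]] by simp

lemma J_ext: "f \<in> J m \<Longrightarrow> (\<And>v. f v = g v) \<Longrightarrow> g \<in> J m"
  by (metis ext)

lemma J_Dt: "f \<in> J m \<Longrightarrow> mu \<in> {1..m} \<Longrightarrow> Dt mu f \<in> J m"
proof (induction rule: J.induct)
  case J_zero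
  then show ?case using J.J_zero by simp
next
  case (J_step a g h)
  have smooth: "smooth a" "smooth g" "smooth h"
    using J_step by (auto intro: AB_smooth gens_AB J_subset_AB)
  have "(\<lambda>v. Dt mu a v * g v) \<in> J m"
    by (rule J_mult[OF J_gen[OF J_step(2)] AB_Dt[OF J_step(1,5)]])
  moreover have "(\<lambda>v. a v * Dt mu g v) \<in> J m"
    by (rule J_mult[OF J_gen[OF Dt_gens[OF J_step(2,5)]] J_step(1)])
  ultimately have "(\<lambda>v. (Dt mu a v * g v + a v * Dt mu g v) + Dt mu h v) \<in> J m"
    using J_step by (intro J_add)
  then show ?case by (simp add: Dt_add Dt_mult smooth)
qed

lemma J_descending:
  assumes fin: "finite {k. f k \<notin> J m}" and mu: "mu \<in> {1..m}"
    and step: "\<And>k. k \<ge> n \<Longrightarrow> (\<lambda>v. Dt mu (f (Suc k)) v + f k v) \<in> J m"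
  shows "k \<ge> n \<Longrightarrow> f k \<in> J m"
proof -
  from fin obtain K where "\<forall>k\<in>{k. f k \<notin> J m}. k < K"
    unfolding finite_nat_set_iff_bounded by blast
  then have K: "\<And>k. k \<ge> K \<Longrightarrow> f k \<in> J m" by fastforce
  show "k \<ge> n \<Longrightarrow> f k \<in> J m"
  proof (induction "K - k" arbitrary: k rule: less_induct)
    case less
    show ?case
    proof (cases "k \<ge> K")
      case False
      then have "f (Suc k) \<in> J m" using less by auto
      with less.prems have "(\<lambda>v. (Dt mu (f (Suc k)) v + f k v) - Dt mu (f (Suc k)) v) \<in> J m"
        by (intro J_diff step J_Dt mu)
      then show ?thesis by simp
    qed (rule K)
  qed
qed

section \<open>The system for chi\<close>

definition u_eq :: "nat \<Rightarrow> fn \<Rightarrow> fn \<Rightarrow> fn" where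
  "u_eq m cu cp1 = (\<lambda>v. Dt 1 cu v + 2 * (\<Sum>a\<in>{2..m}. Dt a (\<lambda>w. uc a 1 w * cp1 w) v))"

definition chi_eq :: "nat \<Rightarrow> fn \<Rightarrow> fn \<Rightarrow> (nat \<Rightarrow> nat \<Rightarrow> fn) \<Rightarrow> nat \<Rightarrow> nat \<Rightarrow> fn" where
  "chi_eq m cu cp1 chi k a = (\<lambda>v. Dt 1 (chi k a) v
     + (if k = 0 then Dt a cu v else 0)
     + (if k = 0 then 0 else chi (k - 1) a v)
     + 2 * ((if k = 0 then Dt a (\<lambda>w. \<Sum>b\<in>{2..m}. uc b b w * cp1 w) v else 0)
            - (if k = 1 then uc 1 a v * cp1 v else 0)
            + (if k = 0 then (\<Sum>b\<in>{2..m}. Dt b (\<lambda>w. uc b a w * cp1 w) v) else 0)))"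

definition chi0_rel :: "fn \<Rightarrow> (nat \<Rightarrow> nat \<Rightarrow> fn) \<Rightarrow> nat \<Rightarrow> fn" where
  "chi0_rel cp1 chi a = (\<lambda>v. chi 0 a v - 2 * uc 1 a v * cp1 v)"

definition grad_u_rel :: "nat \<Rightarrow> fn \<Rightarrow> fn \<Rightarrow> nat \<Rightarrow> fn" where
  "grad_u_rel m cu cp1 a = (\<lambda>v. Dt a cu v + 2 * ((\<Sum>mu\<in>{1..m}. uc mu a v * Dt mu cp1 v)
     + Dt a (\<lambda>w. \<Sum>b\<in>{2..m}. uc b b w * cp1 w) v))"

definition compat_rel :: "nat \<Rightarrow> fn \<Rightarrow> nat \<Rightarrow> fn" where
  "compat_rel m cp1 a =
     (\<lambda>v. \<Sum>mu\<in>{1..m}. uc mu 1 v * Dt mu (Dt a cp1) v - uc mu a v * Dt mu (Dt 1 cp1) v)"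

lemma smooth_uc [simp, intro]: "smooth (uc l n)"
  by (simp add: uc_def)

lemma Dt_uc [simp]: "Dt mu (uc l n) = (\<lambda>v. v (U l (shift (unit n) mu)))"
  by (simp add: uc_def)

lemma unit_shift_commute: "shift (unit x) y = shift (unit y) x"
  unfolding unit_def by (rule shift_commute)

lemma sum_atLeastAtMost_split_first:
  "2 \<le> (m::nat) \<Longrightarrow> (\<Sum>mu\<in>{1..m}. F mu) = F 1 + (\<Sum>mu\<in>{2..m}. F mu)"
  by (simp add: sum.atLeast_Suc_atMost numeral_2_eq_2)

lemma Lap_eq:
  assumes "2 \<le> m"
  shows "Lap m f = (\<lambda>v. Dt 1 (Dt 1 f) v + Lap' m f v)"
  unfolding Lap_def Lap'_def sum_atLeastAtMost_split_first[OF assms] ..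

lemma chi_eq_Suc_Suc:
  "k \<ge> 1 \<Longrightarrow> chi_eq m cu cp1 chi (Suc k) a = (\<lambda>v. Dt 1 (chi (Suc k) a) v + chi k a v)"
  by (simp add: chi_eq_def)

lemma chi_eq_1: "chi_eq m cu cp1 chi 1 a = (\<lambda>v. Dt 1 (chi 1 a) v + chi0_rel cp1 chi a v)"
  by (simp add: chi_eq_def chi0_rel_def fun_eq_iff)

lemma chi_eq_0:
  assumes "smooth cu" "smooth cp1" "smooth (chi 0 a)" "2 \<le> m"
  shows "chi_eq m cu cp1 chi 0 a = (\<lambda>v.
    grad_u_rel m cu cp1 a v + Dt 1 (chi0_rel cp1 chi a) v + 2 * cp1 v * CE m (unit a) v)"
  using assms unfolding chi_eq_def grad_u_rel_def chi0_rel_def CE_def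
    sum_atLeastAtMost_split_first[OF assms(4)]
  by (simp add: fun_eq_iff Dt_mult Dt_diff sum.distrib algebra_simps
      sum_distrib_left sum_distrib_right)

lemma compat_identity:
  assumes s: "smooth cu" "smooth cp1" and m: "2 \<le> m"
  shows "2 * compat_rel m cp1 a v
    = Dt a (u_eq m cu cp1) v - Dt 1 (grad_u_rel m cu cp1 a) v
      + 2 * CE m (unit a) v * Dt 1 cp1 v + 2 * CE m (\<lambda>_. 0) v * Dt a (Dt 1 cp1) v"
proof -
  (* stated with Suc 0, since the simplifier normalises 1 :: nat to Suc 0 *)
  have cu: "Dt a (Dt (Suc 0) cu) = Dt (Suc 0) (Dt a cu)" using s(1) by (rule Dt_commute)
  have R1: "Dt (Suc 0) (Dt x cp1) = Dt x (Dt (Suc 0) cp1)" for x using s(2) by (rule Dt_commute)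
  have R2: "Dt x (Dt a cp1) = Dt a (Dt x cp1)" for x using s(2) by (rule Dt_commute)
  have u1: "shift (unit (Suc 0)) x = shift (unit x) (Suc 0)" for x by (rule unit_shift_commute)
  have u2: "shift (unit x) a = shift (unit a) x" for x by (rule unit_shift_commute)
  have u3: "shift (shift (unit x) (Suc 0)) a = shift (shift (unit x) a) (Suc 0)" for x
    by (rule shift_commute)
  have z: "shift (\<lambda>_. 0) x = unit x" for x by (simp add: unit_def)
  show ?thesis
    unfolding sum_atLeastAtMost_split_first[OF m] CE_def u_eq_def grad_u_rel_def compat_rel_def
    using s by (simp add: Dt_add Dt_mult Dt_sum Dt_diff sum.distrib cu)
      (simp only: R1 R2 u1 u2 u3 z uc_def,
       simp add: algebra_simps sum_distrib_right sum_distrib_left sum_subtractf sum.distrib)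
qed

lemma system_imp_solution:
  assumes m2: "m \<ge> 2" and AB: "cu \<in> AB m" "cp0 \<in> AB m" "cp1 \<in> AB m"
    and AB_chi: "\<forall>a\<in>{2..m}. chi 0 a \<in> AB m"
    and fin: "finite {(k, a). a \<in> {2..m} \<and> chi k a \<notin> J m}"
    and u: "u_eq m cu cp1 \<in> J m"
    and chi: "\<forall>k. \<forall>a\<in>{2..m}. chi_eq m cu cp1 chi k a \<in> J m"
    and p0: "(\<lambda>v. Dt 1 cp0 v - Lap' m cp1 v) \<in> J m"
    and p1: "(\<lambda>v. Dt 1 cp1 v + cp0 v) \<in> J m"
  shows "\<forall>k::nat\<ge>1. \<forall>a\<in>{2..m}. chi k a \<in> J m"
    and "\<forall>a\<in>{2..m}. chi0_rel cp1 chi a \<in> J m"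
    and "\<forall>a\<in>{2..m}. grad_u_rel m cu cp1 a \<in> J m"
    and "\<forall>a\<in>{2..m}. compat_rel m cp1 a \<in> J m"
    and "Lap m cp1 \<in> J m"
    and "(\<lambda>v. cp0 v + Dt 1 cp1 v) \<in> J m"
proof -
  have one: "1 \<in> {1..m}" using m2 by simp
  note chi_eq_0' = chi_eq_0[where chi = chi,
      OF AB_smooth[OF AB(1)] AB_smooth[OF AB(3)] AB_smooth[OF AB_chi[rule_format]] m2]
  show tail: "\<forall>k::nat\<ge>1. \<forall>a\<in>{2..m}. chi k a \<in> J m"
  proof (intro allI impI ballI)
    fix k :: nat and a assume k: "k \<ge> 1" and a: "a \<in> {2..m}"
    have "finite {k. chi k a \<notin> J m}"
      using a by (intro finite_subset[OF _ finite_imageI[OF fin, of fst]]) force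
    moreover have "(\<lambda>v. Dt 1 (chi (Suc k) a) v + chi k a v) \<in> J m" if "k \<ge> 1" for k
      using chi[rule_format, OF a, of "Suc k"] by (simp add: chi_eq_Suc_Suc[OF that])
    ultimately show "chi k a \<in> J m"
      using J_descending[where f = "\<lambda>k. chi k a" and n = 1, OF _ one] k by blast
  qed
  show chi0: "\<forall>a\<in>{2..m}. chi0_rel cp1 chi a \<in> J m"
  proof
    fix a assume a: "a \<in> {2..m}"
    have "(\<lambda>v. chi_eq m cu cp1 chi 1 a v - Dt 1 (chi 1 a) v) \<in> J m"
      using tail a by (intro J_diff[OF chi[rule_format, OF a] J_Dt[OF _ one]]) auto
    then show "chi0_rel cp1 chi a \<in> J m" unfolding chi_eq_1 by simp
  qed
  have CE_J: "CE m (unit a) \<in> J m" "CE m (\<lambda>_. 0) \<in> J m" if "a \<in> {2..m}" for a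
    using that by (auto intro!: CE_in_J mi_unit mi_zero)
  show grad: "\<forall>a\<in>{2..m}. grad_u_rel m cu cp1 a \<in> J m"
  proof
    fix a assume a: "a \<in> {2..m}"
    have "(\<lambda>v. (chi_eq m cu cp1 chi 0 a v - Dt 1 (chi0_rel cp1 chi a) v)
        - 2 * cp1 v * CE m (unit a) v) \<in> J m"
      using a chi chi0 AB(3) by (intro J_diff J_Dt J_mult[OF CE_J(1)] one) auto
    then show "grad_u_rel m cu cp1 a \<in> J m"
      unfolding chi_eq_0'[OF a] by simp
  qed
  show "\<forall>a\<in>{2..m}. compat_rel m cp1 a \<in> J m"
  proof
    fix a assume a: "a \<in> {2..m}"
    then have "(\<lambda>v. 1 / 2 * (Dt a (u_eq m cu cp1) v - Dt 1 (grad_u_rel m cu cp1 a) v)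
        + (Dt 1 cp1 v * CE m (unit a) v + Dt a (Dt 1 cp1) v * CE m (\<lambda>_. 0) v)) \<in> J m"
      using AB(3) grad one
      by (intro J_add J_mult[OF J_diff] J_mult[OF CE_J(1)] J_mult[OF CE_J(2)] J_Dt u AB_Dt) auto
    then show "compat_rel m cp1 a \<in> J m"
    proof (rule J_ext)
      fix v
      show "1 / 2 * (Dt a (u_eq m cu cp1) v - Dt 1 (grad_u_rel m cu cp1 a) v)
          + (Dt 1 cp1 v * CE m (unit a) v + Dt a (Dt 1 cp1) v * CE m (\<lambda>_. 0) v)
          = compat_rel m cp1 a v"
        using compat_identity[OF AB_smooth[OF AB(1)] AB_smooth[OF AB(3)] m2, of a v]
        by (simp add: algebra_simps)
    qed
  qed
  have "(\<lambda>v. Dt 1 (\<lambda>v. Dt 1 cp1 v + cp0 v) v - (Dt 1 cp0 v - Lap' m cp1 v)) \<in> J m"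
    by (intro J_diff J_Dt p1 p0 one)
  then show "Lap m cp1 \<in> J m"
    unfolding Lap_eq[OF m2] using AB by (simp add: Dt_add AB_smooth)
  show "(\<lambda>v. cp0 v + Dt 1 cp1 v) \<in> J m"
    using p1 by (simp add: add.commute)
qed

lemma solution_imp_system:
  assumes m2: "m \<ge> 2" and AB: "cu \<in> AB m" "cp0 \<in> AB m" "cp1 \<in> AB m"
    and AB_chi: "\<forall>a\<in>{2..m}. chi 0 a \<in> AB m"
    and tail: "\<forall>k::nat\<ge>1. \<forall>a\<in>{2..m}. chi k a \<in> J m"
    and chi0: "\<forall>a\<in>{2..m}. chi0_rel cp1 chi a \<in> J m"
    and grad: "\<forall>a\<in>{2..m}. grad_u_rel m cu cp1 a \<in> J m"
    and p: "(\<lambda>v. cp0 v + Dt 1 cp1 v) \<in> J m"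
    and lap: "Lap m cp1 \<in> J m"
  shows "\<forall>k. \<forall>a\<in>{2..m}. chi_eq m cu cp1 chi k a \<in> J m"
    and "(\<lambda>v. Dt 1 cp0 v - Lap' m cp1 v) \<in> J m"
    and "(\<lambda>v. Dt 1 cp1 v + cp0 v) \<in> J m"
proof -
  have one: "1 \<in> {1..m}" using m2 by simp
  note chi_eq_0' = chi_eq_0[where chi = chi,
      OF AB_smooth[OF AB(1)] AB_smooth[OF AB(3)] AB_smooth[OF AB_chi[rule_format]] m2]
  show "\<forall>k. \<forall>a\<in>{2..m}. chi_eq m cu cp1 chi k a \<in> J m"
  proof (intro allI ballI)
    fix k a assume a: "a \<in> {2..m}"
    consider "k = 0" | "k = 1" | j where "k = Suc j" "j \<ge> 1"
      by (cases k) fastforce+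
    then show "chi_eq m cu cp1 chi k a \<in> J m"
    proof cases
      case 1
      have CE: "CE m (unit a) \<in> J m" using a by (intro CE_in_J mi_unit) auto
      have "(\<lambda>v. grad_u_rel m cu cp1 a v + Dt 1 (chi0_rel cp1 chi a) v
          + 2 * cp1 v * CE m (unit a) v) \<in> J m"
        using a grad chi0 AB(3) by (intro J_add J_Dt J_mult[OF CE] one) auto
      then show ?thesis unfolding 1 chi_eq_0'[OF a] .
    next
      case 2
      have "(\<lambda>v. Dt 1 (chi 1 a) v + chi0_rel cp1 chi a v) \<in> J m"
        using a tail chi0 by (intro J_add J_Dt one) auto
      then show ?thesis unfolding 2 chi_eq_1 .
    next
      case 3
      have "(\<lambda>v. Dt 1 (chi (Suc j) a) v + chi j a v) \<in> J m"
        using a tail 3 by (intro J_add J_Dt one) auto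
      then show ?thesis unfolding 3 chi_eq_Suc_Suc[OF 3(2)] .
    qed
  qed
  have "(\<lambda>v. Dt 1 (\<lambda>v. cp0 v + Dt 1 cp1 v) v - Lap m cp1 v) \<in> J m"
    by (intro J_diff J_Dt p lap one)
  then show "(\<lambda>v. Dt 1 cp0 v - Lap' m cp1 v) \<in> J m"
    unfolding Lap_eq[OF m2] using AB by (simp add: Dt_add AB_smooth)
  show "(\<lambda>v. Dt 1 cp1 v + cp0 v) \<in> J m"
    using p by (simp add: add.commute)
qed

theorem lemma2:
  fixes m :: nat and cu cp0 cp1 :: fn and chi :: "nat \<Rightarrow> nat \<Rightarrow> fn"
  assumes m2: "m \<ge> 2"
    and AB: "cu \<in> AB m" "cp0 \<in> AB m" "cp1 \<in> AB m"
            "\<And>k a. a \<in> {2..m} \<Longrightarrow> chi k a \<in> AB m"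
    and fin: "finite {(k, a). a \<in> {2..m} \<and> chi k a \<notin> J m}"
  shows
   "((\<lambda>v. Dt 1 cu v + 2 * (\<Sum>a\<in>{2..m}. Dt a (\<lambda>w. uc a 1 w * cp1 w) v)) \<in> J m
     \<and> (\<forall>k. \<forall>a\<in>{2..m}.
          (\<lambda>v. Dt 1 (chi k a) v
             + (if k = 0 then Dt a cu v else 0)
             + (if k = 0 then 0 else chi (k - 1) a v)
             + 2 * ((if k = 0 then Dt a (\<lambda>w. \<Sum>b\<in>{2..m}. uc b b w * cp1 w) v else 0)
                    - (if k = 1 then uc 1 a v * cp1 v else 0)
                    + (if k = 0 then (\<Sum>b\<in>{2..m}. Dt b (\<lambda>w. uc b a w * cp1 w) v) else 0)))
          \<in> J m)
     \<and> (\<lambda>v. Dt 1 cp0 v - Lap' m cp1 v) \<in> J m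
     \<and> (\<lambda>v. Dt 1 cp1 v + cp0 v) \<in> J m)
   \<longleftrightarrow>
    ((\<forall>a\<in>{2..m}. (\<lambda>v. chi 0 a v - 2 * uc 1 a v * cp1 v) \<in> J m)
     \<and> (\<forall>k\<ge>1. \<forall>a\<in>{2..m}. chi k a \<in> J m)
     \<and> (\<lambda>v. cp0 v + Dt 1 cp1 v) \<in> J m
     \<and> Lap m cp1 \<in> J m
     \<and> (\<forall>a\<in>{2..m}.
          (\<lambda>v. \<Sum>mu\<in>{1..m}. uc mu 1 v * Dt mu (Dt a cp1) v - uc mu a v * Dt mu (Dt 1 cp1) v)
          \<in> J m)
     \<and> (\<lambda>v. Dt 1 cu v + 2 * (\<Sum>a\<in>{2..m}. Dt a (\<lambda>w. uc a 1 w * cp1 w) v)) \<in> J m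
     \<and> (\<forall>a\<in>{2..m}.
          (\<lambda>v. Dt a cu v + 2 * ((\<Sum>mu\<in>{1..m}. uc mu a v * Dt mu cp1 v)
                                 + Dt a (\<lambda>w. \<Sum>b\<in>{2..m}. uc b b w * cp1 w) v))
          \<in> J m))"
proof -
  have AB_chi: "\<forall>a\<in>{2..m}. chi 0 a \<in> AB m" using AB(4) by blast
  note defs = u_eq_def chi_eq_def chi0_rel_def grad_u_rel_def compat_rel_def
  show ?thesis (is "?system \<longleftrightarrow> ?solution")
  proof
    assume ?system
    then have u: "u_eq m cu cp1 \<in> J m"
      and chi: "\<forall>k. \<forall>a\<in>{2..m}. chi_eq m cu cp1 chi k a \<in> J m"
      and p: "(\<lambda>v. Dt 1 cp0 v - Lap' m cp1 v) \<in> J m" "(\<lambda>v. Dt 1 cp1 v + cp0 v) \<in> J m"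
      unfolding defs by blast+
    show ?solution
      using system_imp_solution[where chi = chi, OF m2 AB(1-3) AB_chi fin u chi p] u
      unfolding defs by blast
  next
    assume ?solution
    then have u: "u_eq m cu cp1 \<in> J m"
      and tail: "\<forall>k::nat\<ge>1. \<forall>a\<in>{2..m}. chi k a \<in> J m"
      and chi0: "\<forall>a\<in>{2..m}. chi0_rel cp1 chi a \<in> J m"
      and grad: "\<forall>a\<in>{2..m}. grad_u_rel m cu cp1 a \<in> J m"
      and p: "(\<lambda>v. cp0 v + Dt 1 cp1 v) \<in> J m"
      and lap: "Lap m cp1 \<in> J m"
      unfolding defs by blast+
    show ?system
      using solution_imp_system[where chi = chi, OF m2 AB(1-3) AB_chi tail chi0 grad p lap] u
      unfolding defs by blast
  qed
qed

end
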